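(* Let $Z$ be a smooth extremal assignment of order $n$ with contraction indicator $\mathcal{C}$, and let $B_1,\dots,B_k$ be the maximal elements of $\mathcal{C}$. Suppose one of the following holds: (1) there is $j\in[n]$ with $j\notin\bigcup_{i=1}^k B_i$; (2) there is $j\in[n]$ contained in exactly one of $B_1,\dots,B_k$; (3) $|B_i|<n/2$ for all $i$. Then there exists weight data $A$ with $Z\subset Z_A$ (i.e. $Z(G)\subset Z_A(G)$ for all $G\in S(n)$).
   Context: $[n]=\{1,\dots,n\}$. A stable $n$-labeled tree is a finite tree with $n$ leaves labeled bijectively by $[n]$, all internal vertices of degree $\ge 3$; $V(G)$ its internal vertices; $S(n)$ the set of such trees up to label-preserving isomorphism, $S_2(n)$ those with 2 internal vertices; $\ell(v)$ is the set of labels of leaves adjacent to $v$. $G\rightsquigarrow G'$: $G'$ obtained by collapsing connected sets of internal vertices, inducing surjection $\pi:V(G)\to V(G')$; $v\rightsquigarrow v'$ means $\pi(v)=v'$. An extremal assignment of order $n$: rule $Z(G)\subset V(G)$ for $G\in S(n)$ with (a) $Z(G)\ne V(G)$, (b) if $G\rightsquigarrow G'$ and $\pi^{-1}(v')=\{v_1,\dots,v_k\}$ then $v'\in Z(G')\iff v_1,\dots,v_k\in Z(G)$. $Z$ is smooth if for every $G$, $v\in Z(G)$ there are $G'\in S_2(n)$, $v'\in Z(G')$ with $G\rightsquigarrow G'$, $v\rightsquigarrow v'$. The contraction indicator of $Z$ is $\mathcal{C}=\{\ell(v):G\in S_2(n),v\in Z(G)\}$. Weight data: $A=(a_1,\dots,a_n)$,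 $a_i\in\mathbb{Q}\cap(0,1]$, $\sum a_i>2$. A tail of $G$ is a nonempty connected $T\subset V(G)$ joined to $V(G)\setminus T$ by exactly one edge; $\ell(T)$ the labels of leaves adjacent to $T$. $Z_A(G)=\{v\in V(G):\exists$ tail $T\ni v$ with $\sum_{i\in\ell(T)}a_i\le1\}$. *)

theory Defs
  imports Complex_Main
begin

text \<open>Internal vertices are natural numbers,
  internal edges are two-element sets of internal vertices, and leaf i (for i in {1..n})
  is attached to the internal vertex leafmap i. Trees are considered concretely;
  label-preserving isomorphisms are particular contractions (bijective pi), so
  axiom (b) of an extremal assignment forces isomorphism invariance.\<close>

record stree =
  verts :: "nat set"
  edges :: "nat set set"
  leafmap :: "nat \<Rightarrow> nat"

definition conn_in :: "stree \<Rightarrow> nat set \<Rightarrow> bool" where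
  "conn_in G T \<longleftrightarrow>
     (\<forall>u\<in>T. \<forall>w\<in>T. (u, w) \<in> {(x, y). {x, y} \<in> edges G \<and> x \<in> T \<and> y \<in> T}\<^sup>*)"

definition is_stree :: "nat \<Rightarrow> stree \<Rightarrow> bool" where
  "is_stree n G \<longleftrightarrow>
     finite (verts G) \<and> verts G \<noteq> {} \<and>
     (\<forall>e\<in>edges G. e \<subseteq> verts G \<and> card e = 2) \<and>
     conn_in G (verts G) \<and>
     card (edges G) + 1 = card (verts G) \<and>
     (\<forall>i\<in>{1..n}. leafmap G i \<in> verts G) \<and>
     (\<forall>v\<in>verts G. card {e\<in>edges G. v \<in> e} + card {i\<in>{1..n}. leafmap G i = v} \<ge> 3)"

definition S :: "nat \<Rightarrow> stree set" where
  "S n = {G. is_stree n G}"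

definition S2 :: "nat \<Rightarrow> stree set" where
  "S2 n = {G \<in> S n. card (verts G) = 2}"

definition lab :: "nat \<Rightarrow> stree \<Rightarrow> nat \<Rightarrow> nat set" where
  "lab n G v = {i\<in>{1..n}. leafmap G i = v}"

definition labs :: "nat \<Rightarrow> stree \<Rightarrow> nat set \<Rightarrow> nat set" where
  "labs n G T = {i\<in>{1..n}. leafmap G i \<in> T}"

definition contracts :: "nat \<Rightarrow> stree \<Rightarrow> stree \<Rightarrow> (nat \<Rightarrow> nat) \<Rightarrow> bool" where
  "contracts n G G' \<pi> \<longleftrightarrow>
     \<pi> ` verts G = verts G' \<and>
     (\<forall>v'\<in>verts G'. conn_in G {v\<in>verts G. \<pi> v = v'}) \<and>
     (\<forall>i\<in>{1..n}. leafmap G' i = \<pi> (leafmap G i)) \<and>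
     edges G' = {{\<pi> u, \<pi> w} | u w. {u, w} \<in> edges G \<and> \<pi> u \<noteq> \<pi> w}"

definition extremal_assignment :: "nat \<Rightarrow> (stree \<Rightarrow> nat set) \<Rightarrow> bool" where
  "extremal_assignment n Z \<longleftrightarrow>
     (\<forall>G\<in>S n. Z G \<subseteq> verts G \<and> Z G \<noteq> verts G) \<and>
     (\<forall>G\<in>S n. \<forall>G'\<in>S n. \<forall>\<pi>. contracts n G G' \<pi> \<longrightarrow>
        (\<forall>v'\<in>verts G'. v' \<in> Z G' \<longleftrightarrow> (\<forall>v\<in>verts G. \<pi> v = v' \<longrightarrow> v \<in> Z G)))"

definition smooth :: "nat \<Rightarrow> (stree \<Rightarrow> nat set) \<Rightarrow> bool" where
  "smooth n Z \<longleftrightarrow>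
     (\<forall>G\<in>S n. \<forall>v\<in>Z G. \<exists>G'\<in>S2 n. \<exists>\<pi>. contracts n G G' \<pi> \<and> \<pi> v \<in> Z G')"

definition contraction_indicator :: "nat \<Rightarrow> (stree \<Rightarrow> nat set) \<Rightarrow> nat set set" where
  "contraction_indicator n Z = {lab n G v | G v. G \<in> S2 n \<and> v \<in> Z G}"

definition maximal_elems :: "nat set set \<Rightarrow> nat set set" where
  "maximal_elems C = {B\<in>C. \<forall>B'\<in>C. B \<subseteq> B' \<longrightarrow> B' = B}"

definition weight_data :: "nat \<Rightarrow> (nat \<Rightarrow> rat) \<Rightarrow> bool" where
  "weight_data n a \<longleftrightarrow> (\<forall>i\<in>{1..n}. 0 < a i \<and> a i \<le> 1) \<and> sum a {1..n} > 2"

definition is_tail :: "stree \<Rightarrow> nat set \<Rightarrow> bool" where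
  "is_tail G T \<longleftrightarrow> T \<noteq> {} \<and> T \<subseteq> verts G \<and> conn_in G T \<and>
     card {e\<in>edges G. e \<inter> T \<noteq> {} \<and> e - T \<noteq> {}} = 1"

definition ZA :: "nat \<Rightarrow> (nat \<Rightarrow> rat) \<Rightarrow> stree \<Rightarrow> nat set" where
  "ZA n a G = {v\<in>verts G. \<exists>T. is_tail G T \<and> v \<in> T \<and> sum a (labs n G T) \<le> 1}"

end

theory Submission
  imports Defs
begin

text \<open>By smoothness, a vertex v of Z(G) is sent into Z(G') for a two-vertex tree G'; the fibre of
  v is then a tail of G whose labels form a member of the contraction indicator, hence lie in a
  maximal element B. So Z is contained in Z_A as soon as every maximal element has weight at
  most 1. The axioms of an extremal assignment forbid two members of the indicator from covering
  all labels, since a tree contracting onto both two-vertex trees would have all its vertices in Z.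
  In cases (1) and (2) this lets one put almost all weight of a single set on one label j, and in
  case (3) the constant weight 2/(n - 1) works.\<close>

lemma conn_in_singleton: "conn_in G {x}"
  unfolding conn_in_def by auto

lemma conn_in_edge:
  assumes "{x, y} \<in> edges G"
  shows "conn_in G {x, y}"
  unfolding conn_in_def
proof (intro ballI)
  fix u w assume "u \<in> {x, y}" "w \<in> {x, y}"
  moreover have "{y, x} \<in> edges G" using assms by (simp add: insert_commute)
  ultimately show "(u, w) \<in> {(a, b). {a, b} \<in> edges G \<and> a \<in> {x, y} \<and> b \<in> {x, y}}\<^sup>*"
    using assms by auto
qed

lemma conn_in_Un:
  assumes "conn_in G A" "conn_in G B" "A \<inter> B \<noteq> {}"
  shows "conn_in G (A \<union> B)"
  unfolding conn_in_def
proof (intro ballI)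
  let ?R = "\<lambda>X. {(x, y). {x, y} \<in> edges G \<and> x \<in> X \<and> y \<in> X}"
  have reach: "(x, y) \<in> (?R (A \<union> B))\<^sup>*" if "x \<in> X" "y \<in> X" "conn_in G X" "X \<subseteq> A \<union> B" for x y X
  proof -
    have "(x, y) \<in> (?R X)\<^sup>*" using that(1-3) unfolding conn_in_def by blast
    moreover have "?R X \<subseteq> ?R (A \<union> B)" using that(4) by auto
    ultimately show ?thesis using rtrancl_mono by blast
  qed
  obtain c where c: "c \<in> A" "c \<in> B" using assms(3) by blast
  have to_c: "(u, c) \<in> (?R (A \<union> B))\<^sup>*" and from_c: "(c, u) \<in> (?R (A \<union> B))\<^sup>*"
    if "u \<in> A \<union> B" for u
    using that reach[of u A c] reach[of c A u] reach[of u B c] reach[of c B u] c assms(1,2)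
    by auto
  fix u w assume "u \<in> A \<union> B" "w \<in> A \<union> B"
  then show "(u, w) \<in> (?R (A \<union> B))\<^sup>*"
    using to_c from_c rtrancl_trans by fast
qed

lemma conn_in_crossing_edge:
  assumes "conn_in G T" "W \<subseteq> T" "u \<in> W" "w \<in> T" "w \<notin> W"
  obtains x y where "x \<in> W" "y \<in> T - W" "{x, y} \<in> edges G"
proof -
  have "(u, w) \<in> {(x, y). {x, y} \<in> edges G \<and> x \<in> T \<and> y \<in> T}\<^sup>*"
    using assms unfolding conn_in_def by blast
  then have "w \<in> W \<or> (\<exists>x\<in>W. \<exists>y\<in>T - W. {x, y} \<in> edges G)"
    by (induction rule: rtrancl_induct) (use assms(3) in blast)+
  then show ?thesis using assms(5) that by blast
qed

text \<open>A connected set with k vertices contains at least k - 1 edges: grow a connected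
  subset one vertex at a time along crossing edges.\<close>

lemma conn_in_grow:
  assumes "conn_in G T" "finite T" "finite (edges G)" "u \<in> T" "1 \<le> k" "k \<le> card T"
  shows "\<exists>W\<subseteq>T. u \<in> W \<and> card W = k \<and> k \<le> card {e\<in>edges G. e \<subseteq> W} + 1"
  using assms(5,6)
proof (induction k rule: nat_induct_at_least)
  case base
  show ?case using assms(4) by (intro exI[of _ "{u}"]) simp
next
  case (Suc k)
  then obtain W where W: "W \<subseteq> T" "u \<in> W" "card W = k"
      "k \<le> card {e\<in>edges G. e \<subseteq> W} + 1"
    by auto
  have "W \<noteq> T" using W(3) Suc.prems by auto
  then obtain w where "w \<in> T" "w \<notin> W" using W(1) by blast
  then obtain x y where xy: "x \<in> W" "y \<in> T - W" "{x, y} \<in> edges G"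
    using conn_in_crossing_edge[OF assms(1) W(1,2)] by blast
  have "finite W" using W(1) assms(2) finite_subset by blast
  then have card_W': "card (insert y W) = Suc k" using W(3) xy(2) by simp
  have "insert {x, y} {e\<in>edges G. e \<subseteq> W} \<subseteq> {e\<in>edges G. e \<subseteq> insert y W}"
    using xy by blast
  then have "card (insert {x, y} {e\<in>edges G. e \<subseteq> W}) \<le> card {e\<in>edges G. e \<subseteq> insert y W}"
    using assms(3) by (intro card_mono) simp_all
  moreover have "{x, y} \<notin> {e\<in>edges G. e \<subseteq> W}" using xy by blast
  ultimately have "Suc (card {e\<in>edges G. e \<subseteq> W}) \<le> card {e\<in>edges G. e \<subseteq> insert y W}"
    using assms(3) by simp
  moreover have "insert y W \<subseteq> T" "u \<in> insert y W" using W(1,2) xy(2) by auto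
  ultimately show ?case
    using W(4) card_W' by (intro exI[of _ "insert y W"]) simp
qed

lemma conn_in_card_le:
  assumes "conn_in G T" "finite T" "finite (edges G)"
  shows "card T \<le> card {e\<in>edges G. e \<subseteq> T} + 1"
proof (cases "T = {}")
  case False
  then obtain u where "u \<in> T" by blast
  moreover have "1 \<le> card T" using False assms(2) by (simp add: Suc_le_eq card_gt_0_iff)
  ultimately obtain W where "W \<subseteq> T" "card W = card T" "card T \<le> card {e\<in>edges G. e \<subseteq> W} + 1"
    using conn_in_grow[OF assms] by blast
  then show ?thesis using card_subset_eq[OF assms(2)] by metis
qed simp

lemma stree_finite_edges:
  assumes "is_stree n G"
  shows "finite (edges G)"
proof (rule finite_subset)
  show "edges G \<subseteq> Pow (verts G)" using assms by (auto simp: is_stree_def)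
  show "finite (Pow (verts G))" using assms by (simp add: is_stree_def)
qed

text \<open>Each part spans at least (its size - 1) edges, while the tree has only |V| - 1 edges.\<close>

lemma stree_crossing_edges_le_one:
  assumes G: "is_stree n G" and split: "verts G = T \<union> U" "T \<inter> U = {}"
    and conn: "conn_in G T" "conn_in G U"
  shows "card {e\<in>edges G. e \<inter> T \<noteq> {} \<and> e - T \<noteq> {}} \<le> 1"
proof -
  define ET where "ET = {e\<in>edges G. e \<subseteq> T}"
  define EU where "EU = {e\<in>edges G. e \<subseteq> U}"
  define X where "X = {e\<in>edges G. e \<inter> T \<noteq> {} \<and> e - T \<noteq> {}}"
  have fin: "finite (verts G)" "finite (edges G)"
    using G stree_finite_edges unfolding is_stree_def by blast+
  have edge: "e \<subseteq> T \<union> U" "e \<noteq> {}" if "e \<in> edges G" for e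
  proof -
    have "e \<subseteq> verts G" "card e = 2" using G that unfolding is_stree_def by blast+
    then show "e \<subseteq> T \<union> U" "e \<noteq> {}" using split(1) by auto
  qed
  have "edges G = ET \<union> EU \<union> X"
    using edge(1) unfolding ET_def EU_def X_def by blast
  moreover have "ET \<inter> EU = {}" "(ET \<union> EU) \<inter> X = {}"
    using edge split(2) unfolding ET_def EU_def X_def by blast+
  moreover have "finite ET" "finite EU" "finite X"
    using fin(2) unfolding ET_def EU_def X_def by simp_all
  ultimately have "card (edges G) = card ET + card EU + card X"
    by (simp add: card_Un_disjoint)
  moreover have "card (verts G) = card T + card U"
    using split fin(1) by (simp add: card_Un_disjoint)
  moreover have "card T \<le> card ET + 1" "card U \<le> card EU + 1"
    using conn_in_card_le[OF conn(1)] conn_in_card_le[OF conn(2)] split fin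
    unfolding ET_def EU_def by auto
  moreover have "card (edges G) + 1 = card (verts G)" using G unfolding is_stree_def by blast
  ultimately show ?thesis unfolding X_def by linarith
qed

definition two_vertex_tree :: "nat set \<Rightarrow> stree" where
  "two_vertex_tree B =
     \<lparr>verts = {0, 1}, edges = {{0, 1}}, leafmap = (\<lambda>i. if i \<in> B then 0 else 1)\<rparr>"

definition path_tree :: "nat set \<Rightarrow> nat set \<Rightarrow> stree" where
  "path_tree X Y =
     \<lparr>verts = {0, 1, 2}, edges = {{0, 1}, {1, 2}},
      leafmap = (\<lambda>i. if i \<in> X then 0 else if i \<in> Y then 2 else 1)\<rparr>"

lemma two_vertex_tree_in_S:
  assumes "B \<subseteq> {1..n}" "2 \<le> card B" "2 \<le> card ({1..n} - B)"
  shows "two_vertex_tree B \<in> S n"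
proof -
  let ?G = "two_vertex_tree B"
  have conn: "conn_in ?G (verts ?G)"
    using conn_in_edge[of 0 1 ?G] by (simp add: two_vertex_tree_def)
  have "{e\<in>edges ?G. v \<in> e} = {{0, 1}}" if "v \<in> verts ?G" for v
    using that by (auto simp: two_vertex_tree_def)
  moreover have "{i\<in>{1..n}. leafmap ?G i = 0} = B" "{i\<in>{1..n}. leafmap ?G i = 1} = {1..n} - B"
    using assms(1) by (auto simp: two_vertex_tree_def)
  ultimately have "\<forall>v\<in>verts ?G. 3 \<le> card {e\<in>edges ?G. v \<in> e} + card {i\<in>{1..n}. leafmap ?G i = v}"
    using assms(2,3) by (simp add: two_vertex_tree_def)
  moreover have "\<forall>e\<in>edges ?G. e \<subseteq> verts ?G \<and> card e = 2" "card (edges ?G) + 1 = card (verts ?G)"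
    "\<forall>i\<in>{1..n}. leafmap ?G i \<in> verts ?G"
    by (simp_all add: two_vertex_tree_def)
  ultimately show ?thesis
    using conn unfolding S_def is_stree_def by (simp add: two_vertex_tree_def)
qed

lemma path_tree_in_S:
  assumes "X \<subseteq> {1..n}" "Y \<subseteq> {1..n}" "X \<inter> Y = {}" "2 \<le> card X" "2 \<le> card Y"
    "{1..n} - X - Y \<noteq> {}"
  shows "path_tree X Y \<in> S n"
proof -
  let ?G = "path_tree X Y"
  have "conn_in ?G ({0, 1} \<union> {1, 2})"
    by (intro conn_in_Un conn_in_edge) (simp_all add: path_tree_def)
  then have conn: "conn_in ?G (verts ?G)"
    by (simp add: path_tree_def insert_commute)
  have ne: "{0::nat, 1} \<noteq> {1, 2}" by (simp add: doubleton_eq_iff)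
  have "card {e\<in>edges ?G. 0 \<in> e} = 1" "card {e\<in>edges ?G. 1 \<in> e} = 2"
    "card {e\<in>edges ?G. 2 \<in> e} = 1"
  proof -
    have "{e\<in>edges ?G. 0 \<in> e} = {{0, 1}}" "{e\<in>edges ?G. 1 \<in> e} = {{0, 1}, {1, 2}}"
      "{e\<in>edges ?G. 2 \<in> e} = {{1, 2}}"
      by (auto simp: path_tree_def)
    then show "card {e\<in>edges ?G. 0 \<in> e} = 1" "card {e\<in>edges ?G. 1 \<in> e} = 2"
      "card {e\<in>edges ?G. 2 \<in> e} = 1"
      using ne by simp_all
  qed
  moreover have "{i\<in>{1..n}. leafmap ?G i = 0} = X" "{i\<in>{1..n}. leafmap ?G i = 2} = Y"
    "{i\<in>{1..n}. leafmap ?G i = 1} = {1..n} - X - Y"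
    using assms(1-3) by (auto simp: path_tree_def)
  moreover have "1 \<le> card ({1..n} - X - Y)"
    using assms(6) by (simp add: Suc_le_eq card_gt_0_iff)
  ultimately have "\<forall>v\<in>verts ?G. 3 \<le> card {e\<in>edges ?G. v \<in> e} + card {i\<in>{1..n}. leafmap ?G i = v}"
    using assms(4,5) by (simp add: path_tree_def)
  moreover have "\<forall>e\<in>edges ?G. e \<subseteq> verts ?G \<and> card e = 2" "card (edges ?G) + 1 = card (verts ?G)"
    "\<forall>i\<in>{1..n}. leafmap ?G i \<in> verts ?G"
    using ne by (simp_all add: path_tree_def)
  ultimately show ?thesis
    using conn unfolding S_def is_stree_def by (simp add: path_tree_def)
qed

lemma S2_shape:
  assumes "G \<in> S2 n" "v \<in> verts G"
  obtains w where "verts G = {v, w}" "v \<noteq> w" "edges G = {{v, w}}"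
    "lab n G w = {1..n} - lab n G v" "2 \<le> card (lab n G v)" "2 \<le> card (lab n G w)"
proof -
  have G: "is_stree n G" and "card (verts G) = 2" using assms by (auto simp: S2_def S_def)
  then obtain x y where "verts G = {x, y}" "x \<noteq> y" by (auto simp: card_2_iff)
  then obtain w where vw: "verts G = {v, w}" "v \<noteq> w" using assms(2) by (auto simp: insert_commute)
  have "card (edges G) + 1 = card (verts G)" using G unfolding is_stree_def by blast
  then have "card (edges G) = 1" using \<open>card (verts G) = 2\<close> by simp
  then obtain e where e: "edges G = {e}" by (auto simp: card_1_singleton_iff)
  have "e \<subseteq> verts G" "card e = 2" using G e unfolding is_stree_def by blast+
  then have "e = {v, w}" using vw by (intro card_subset_eq) auto
  with e have edges: "edges G = {{v, w}}" by simp
  have "\<forall>i\<in>{1..n}. leafmap G i \<in> verts G" using G unfolding is_stree_def by blast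
  then have labw: "lab n G w = {1..n} - lab n G v" using vw by (auto simp: lab_def)
  have deg: "\<forall>u\<in>verts G. 3 \<le> card {e\<in>edges G. u \<in> e} + card (lab n G u)"
    using G unfolding is_stree_def lab_def by blast
  have "card {e\<in>edges G. u \<in> e} = 1" if "u \<in> verts G" for u
  proof -
    have "{e\<in>edges G. u \<in> e} = {{v, w}}" using that edges vw(1) by auto
    then show ?thesis by simp
  qed
  then have "2 \<le> card (lab n G v)" "2 \<le> card (lab n G w)"
    using deg vw(1) by fastforce+
  then show ?thesis using that vw edges labw by blast
qed

lemma contracts_onto_two_vertex_tree:
  assumes G: "G \<in> S n" and onto: "\<pi> ` verts G = {0, 1}"
    and conn: "conn_in G {v\<in>verts G. \<pi> v = 0}" "conn_in G {v\<in>verts G. \<pi> v = 1}"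
    and cross: "{u, w} \<in> edges G" "\<pi> u \<noteq> \<pi> w"
    and labels: "\<forall>i\<in>{1..n}. i \<in> B \<longleftrightarrow> \<pi> (leafmap G i) = 0"
  shows "contracts n G (two_vertex_tree B) \<pi>"
proof -
  have E: "\<forall>e\<in>edges G. e \<subseteq> verts G" and L: "\<forall>i\<in>{1..n}. leafmap G i \<in> verts G"
    using G unfolding S_def is_stree_def by blast+
  have "{{\<pi> x, \<pi> y} | x y. {x, y} \<in> edges G \<and> \<pi> x \<noteq> \<pi> y} = {{0, 1}}"
  proof (intro equalityI subsetI)
    fix e assume "e \<in> {{\<pi> x, \<pi> y} | x y. {x, y} \<in> edges G \<and> \<pi> x \<noteq> \<pi> y}"
    then obtain x y where "e = {\<pi> x, \<pi> y}" "{x, y} \<in> edges G" "\<pi> x \<noteq> \<pi> y" by blast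
    moreover have "\<pi> x \<in> {0, 1}" "\<pi> y \<in> {0, 1}" using calculation(2) E onto by blast+
    ultimately show "e \<in> {{0, 1}}" by auto
  next
    fix e assume "e \<in> {{0 :: nat, 1}}"
    have "\<pi> u \<in> {0, 1}" "\<pi> w \<in> {0, 1}" using cross(1) E onto by blast+
    with cross(2) have "e = {\<pi> u, \<pi> w}" using \<open>e \<in> {{0, 1}}\<close> by auto
    with cross show "e \<in> {{\<pi> x, \<pi> y} | x y. {x, y} \<in> edges G \<and> \<pi> x \<noteq> \<pi> y}"
      by blast
  qed
  moreover have "\<forall>i\<in>{1..n}. leafmap (two_vertex_tree B) i = \<pi> (leafmap G i)"
  proof
    fix i assume "i \<in> {1..n}"
    moreover have "\<pi> (leafmap G i) \<in> {0, 1}" using calculation L onto by blast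
    ultimately show "leafmap (two_vertex_tree B) i = \<pi> (leafmap G i)"
      using labels by (auto simp: two_vertex_tree_def)
  qed
  moreover have "verts (two_vertex_tree B) = {0, 1}" "edges (two_vertex_tree B) = {{0, 1}}"
    by (simp_all add: two_vertex_tree_def)
  ultimately show ?thesis
    using onto conn unfolding contracts_def by auto
qed

lemma extremal_assignment_subset:
  "extremal_assignment n Z \<Longrightarrow> G \<in> S n \<Longrightarrow> Z G \<subseteq> verts G"
  unfolding extremal_assignment_def by blast

lemma extremal_assignment_ne:
  "extremal_assignment n Z \<Longrightarrow> G \<in> S n \<Longrightarrow> Z G \<noteq> verts G"
  unfolding extremal_assignment_def by blast

lemma extremal_assignment_contracts_iff:
  assumes "extremal_assignment n Z" "G \<in> S n" "G' \<in> S n" "contracts n G G' \<pi>" "v' \<in> verts G'"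
  shows "v' \<in> Z G' \<longleftrightarrow> (\<forall>v\<in>verts G. \<pi> v = v' \<longrightarrow> v \<in> Z G)"
  using assms unfolding extremal_assignment_def by blast

lemma contraction_indicatorD:
  assumes ext: "extremal_assignment n Z" and "B \<in> contraction_indicator n Z"
  shows "B \<subseteq> {1..n}" "2 \<le> card B" "2 \<le> card ({1..n} - B)" "0 \<in> Z (two_vertex_tree B)"
proof -
  obtain G v where G: "G \<in> S2 n" "v \<in> Z G" and B: "B = lab n G v"
    using assms(2) unfolding contraction_indicator_def by blast
  have GS: "G \<in> S n" using G(1) by (simp add: S2_def)
  then have "v \<in> verts G" using extremal_assignment_subset[OF ext] G(2) by blast
  then obtain w where vw: "verts G = {v, w}" "v \<noteq> w" "edges G = {{v, w}}"
      "lab n G w = {1..n} - B" "2 \<le> card B" "2 \<le> card ({1..n} - B)"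
    using S2_shape[OF G(1)] unfolding B by metis
  show "B \<subseteq> {1..n}" unfolding B lab_def by blast
  show "2 \<le> card B" "2 \<le> card ({1..n} - B)" by (fact vw(5), fact vw(6))
  define \<pi> :: "nat \<Rightarrow> nat" where "\<pi> x = (if x = v then 0 else 1)" for x
  have fibres: "{x\<in>verts G. \<pi> x = 0} = {v}" "{x\<in>verts G. \<pi> x = 1} = {w}"
    using vw(1,2) by (auto simp: \<pi>_def)
  have "contracts n G (two_vertex_tree B) \<pi>"
  proof (rule contracts_onto_two_vertex_tree[OF GS])
    show "\<pi> ` verts G = {0, 1}" using vw(1,2) by (auto simp: \<pi>_def)
    show "{v, w} \<in> edges G" "\<pi> v \<noteq> \<pi> w" using vw(2,3) by (simp_all add: \<pi>_def)
    show "\<forall>i\<in>{1..n}. i \<in> B \<longleftrightarrow> \<pi> (leafmap G i) = 0" by (simp add: B lab_def \<pi>_def)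
  qed (simp_all only: fibres conn_in_singleton)
  moreover have "two_vertex_tree B \<in> S n"
    using two_vertex_tree_in_S \<open>B \<subseteq> {1..n}\<close> vw(5,6) by blast
  ultimately have "0 \<in> Z (two_vertex_tree B) \<longleftrightarrow> (\<forall>x\<in>verts G. \<pi> x = 0 \<longrightarrow> x \<in> Z G)"
    using extremal_assignment_contracts_iff[OF ext GS] by (simp add: two_vertex_tree_def)
  moreover have "\<forall>x\<in>verts G. \<pi> x = 0 \<longrightarrow> x \<in> Z G" using fibres(1) G(2) by auto
  ultimately show "0 \<in> Z (two_vertex_tree B)" by blast
qed

lemma two_vertex_tree_contracts_id:
  assumes "two_vertex_tree B \<in> S n"
  shows "contracts n (two_vertex_tree B) (two_vertex_tree B) id"
proof (rule contracts_onto_two_vertex_tree[OF assms])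
  have "{v\<in>verts (two_vertex_tree B). id v = k} = {k}" if "k \<in> {0, 1}" for k
    using that by (auto simp: two_vertex_tree_def)
  then show "conn_in (two_vertex_tree B) {v\<in>verts (two_vertex_tree B). id v = 0}"
    "conn_in (two_vertex_tree B) {v\<in>verts (two_vertex_tree B). id v = 1}"
    by (simp_all add: conn_in_singleton)
qed (auto simp: two_vertex_tree_def)

lemma two_vertex_tree_contracts_swap:
  assumes "two_vertex_tree B \<in> S n" "\<forall>i\<in>{1..n}. i \<in> C \<longleftrightarrow> i \<notin> B"
  shows "contracts n (two_vertex_tree B) (two_vertex_tree C) (\<lambda>x. if x = 0 then 1 else 0)"
proof (rule contracts_onto_two_vertex_tree[OF assms(1)])
  have fibres: "{v\<in>verts (two_vertex_tree B). (if v = 0 then 1 else 0) = (0::nat)} = {1}"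
    "{v\<in>verts (two_vertex_tree B). (if v = 0 then 1 else 0) = (1::nat)} = {0}"
    by (auto simp: two_vertex_tree_def)
  show "conn_in (two_vertex_tree B) {v\<in>verts (two_vertex_tree B). (if v = 0 then 1 else 0) = (0::nat)}"
    unfolding fibres(1) by (rule conn_in_singleton)
  show "conn_in (two_vertex_tree B) {v\<in>verts (two_vertex_tree B). (if v = 0 then 1 else 0) = (1::nat)}"
    unfolding fibres(2) by (rule conn_in_singleton)
qed (use assms(2) in \<open>auto simp: two_vertex_tree_def\<close>)

lemma path_tree_contracts_left:
  assumes "path_tree X Y \<in> S n" "X \<inter> Y = {}" "\<forall>i\<in>{1..n}. i \<in> C \<longleftrightarrow> i \<notin> Y"
  shows "contracts n (path_tree X Y) (two_vertex_tree C) (\<lambda>x. if x = 2 then 1 else 0)"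
proof (rule contracts_onto_two_vertex_tree[OF assms(1), where u = 1 and w = 2])
  have fibres: "{v\<in>verts (path_tree X Y). (if v = 2 then 1 else 0) = (0::nat)} = {0, 1}"
    "{v\<in>verts (path_tree X Y). (if v = 2 then 1 else 0) = (1::nat)} = {2}"
    by (auto simp: path_tree_def)
  show "conn_in (path_tree X Y) {v\<in>verts (path_tree X Y). (if v = 2 then 1 else 0) = (0::nat)}"
    unfolding fibres(1) by (rule conn_in_edge) (simp add: path_tree_def)
  show "conn_in (path_tree X Y) {v\<in>verts (path_tree X Y). (if v = 2 then 1 else 0) = (1::nat)}"
    unfolding fibres(2) by (rule conn_in_singleton)
qed (use assms(2,3) in \<open>auto simp: path_tree_def\<close>)

lemma path_tree_contracts_right:
  assumes "path_tree X Y \<in> S n" "\<forall>i\<in>{1..n}. i \<in> C \<longleftrightarrow> i \<notin> X"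
  shows "contracts n (path_tree X Y) (two_vertex_tree C) (\<lambda>x. if x = 0 then 1 else 0)"
proof (rule contracts_onto_two_vertex_tree[OF assms(1), where u = 0 and w = 1])
  have fibres: "{v\<in>verts (path_tree X Y). (if v = 0 then 1 else 0) = (0::nat)} = {1, 2}"
    "{v\<in>verts (path_tree X Y). (if v = 0 then 1 else 0) = (1::nat)} = {0}"
    by (auto simp: path_tree_def)
  show "conn_in (path_tree X Y) {v\<in>verts (path_tree X Y). (if v = 0 then 1 else 0) = (0::nat)}"
    unfolding fibres(1) by (rule conn_in_edge) (simp add: path_tree_def)
  show "conn_in (path_tree X Y) {v\<in>verts (path_tree X Y). (if v = 0 then 1 else 0) = (1::nat)}"
    unfolding fibres(2) by (rule conn_in_singleton)
qed (use assms(2) in \<open>auto simp: path_tree_def\<close>)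

text \<open>If two members of the contraction indicator covered all labels, some tree would contract
  onto both corresponding two-vertex trees with the fibres of the Z-vertex 0 covering it.\<close>

lemma contraction_indicator_not_cover:
  assumes ext: "extremal_assignment n Z"
    and B1: "B1 \<in> contraction_indicator n Z" and B2: "B2 \<in> contraction_indicator n Z"
  shows "\<not> {1..n} \<subseteq> B1 \<union> B2"
proof
  assume cover: "{1..n} \<subseteq> B1 \<union> B2"
  note B1D = contraction_indicatorD[OF ext B1] and B2D = contraction_indicatorD[OF ext B2]
  have T1: "two_vertex_tree B1 \<in> S n"
    using two_vertex_tree_in_S B1D by blast
  obtain G \<pi>1 \<pi>2 where G: "G \<in> S n"
    and c: "contracts n G (two_vertex_tree B1) \<pi>1" "contracts n G (two_vertex_tree B2) \<pi>2"
    and covered: "\<forall>v\<in>verts G. \<pi>1 v = 0 \<or> \<pi>2 v = 0"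
  proof (cases "B1 \<inter> B2 = {}")
    case True
    have "contracts n (two_vertex_tree B1) (two_vertex_tree B2) (\<lambda>x. if x = 0 then 1 else 0)"
      using True cover by (intro two_vertex_tree_contracts_swap[OF T1]) blast
    with two_vertex_tree_contracts_id[OF T1] show ?thesis
      by (rule that[OF T1]) (simp add: two_vertex_tree_def)
  next
    case False
    define X where "X = {1..n} - B2"
    define Y where "Y = {1..n} - B1"
    have XY: "X \<inter> Y = {}" using cover by (auto simp: X_def Y_def)
    have "{1..n} - X - Y = B1 \<inter> B2" using B1D(1) by (auto simp: X_def Y_def)
    then have "path_tree X Y \<in> S n"
      using B1D(3) B2D(3) False XY by (intro path_tree_in_S) (auto simp: X_def Y_def)
    moreover have "contracts n (path_tree X Y) (two_vertex_tree B1) (\<lambda>x. if x = 2 then 1 else 0)"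
      using calculation XY by (rule path_tree_contracts_left) (auto simp: Y_def)
    moreover have "contracts n (path_tree X Y) (two_vertex_tree B2) (\<lambda>x. if x = 0 then 1 else 0)"
      using calculation(1) by (rule path_tree_contracts_right) (auto simp: X_def)
    ultimately show ?thesis by (rule that) simp
  qed
  have zero_fibre: "{v\<in>verts G. \<pi> v = 0} \<subseteq> Z G"
    if "B \<in> contraction_indicator n Z" "contracts n G (two_vertex_tree B) \<pi>" for B \<pi>
  proof -
    note BD = contraction_indicatorD[OF ext that(1)]
    have "two_vertex_tree B \<in> S n" using two_vertex_tree_in_S BD by blast
    with extremal_assignment_contracts_iff[OF ext G _ that(2), of 0] BD(4) show ?thesis
      by (auto simp: two_vertex_tree_def)
  qed
  have "verts G \<subseteq> Z G"
    using covered zero_fibre[OF B1 c(1)] zero_fibre[OF B2 c(2)] by blast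
  then show False
    using extremal_assignment_subset[OF ext G] extremal_assignment_ne[OF ext G] by blast
qed

lemma labs_fibre:
  assumes "G \<in> S n" "contracts n G G' \<pi>"
  shows "labs n G {x\<in>verts G. \<pi> x = v'} = lab n G' v'"
proof -
  have "\<forall>i\<in>{1..n}. leafmap G i \<in> verts G" using assms(1) unfolding S_def is_stree_def by blast
  moreover have "\<forall>i\<in>{1..n}. leafmap G' i = \<pi> (leafmap G i)"
    using assms(2) unfolding contracts_def by blast
  ultimately show ?thesis unfolding labs_def lab_def by auto
qed

text \<open>A fibre of a contraction onto a two-vertex tree is a tail: the other fibre is connected
  too, so at most one edge of the tree leaves it, and the edge of the two-vertex tree comes from
  such an edge.\<close>

lemma contraction_fibre_is_tail:
  assumes G: "G \<in> S n" and G': "G' \<in> S2 n" and c: "contracts n G G' \<pi>" and v: "v \<in> verts G"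
  shows "is_tail G {x\<in>verts G. \<pi> x = \<pi> v}"
proof -
  define T where "T = {x\<in>verts G. \<pi> x = \<pi> v}"
  obtain onto: "\<pi> ` verts G = verts G'"
    and conn: "\<forall>v'\<in>verts G'. conn_in G {x\<in>verts G. \<pi> x = v'}"
    and edges': "edges G' = {{\<pi> a, \<pi> b} | a b. {a, b} \<in> edges G \<and> \<pi> a \<noteq> \<pi> b}"
    using c unfolding contracts_def by (elim conjE) (rule that; assumption)
  have "\<pi> v \<in> verts G'" using onto v by blast
  then obtain w' where w': "verts G' = {\<pi> v, w'}" "\<pi> v \<noteq> w'" "edges G' = {{\<pi> v, w'}}"
    using S2_shape[OF G'] by metis
  define U where "U = {x\<in>verts G. \<pi> x = w'}"
  have stree: "is_stree n G" using G by (simp add: S_def)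
  have "verts G = T \<union> U" using onto w'(1) by (auto simp: T_def U_def)
  moreover have "T \<inter> U = {}" using w'(2) by (auto simp: T_def U_def)
  moreover have "conn_in G T" "conn_in G U" using conn w'(1) unfolding T_def U_def by blast+
  ultimately have le1: "card {e\<in>edges G. e \<inter> T \<noteq> {} \<and> e - T \<noteq> {}} \<le> 1"
    by (rule stree_crossing_edges_le_one[OF stree])
  have "{\<pi> v, w'} \<in> edges G'" using w'(3) by simp
  then obtain a b where ab: "{\<pi> v, w'} = {\<pi> a, \<pi> b}" "{a, b} \<in> edges G" "\<pi> a \<noteq> \<pi> b"
    unfolding edges' by blast
  have "\<forall>e\<in>edges G. e \<subseteq> verts G" using stree unfolding is_stree_def by blast
  then have "a \<in> T \<longleftrightarrow> \<pi> a = \<pi> v" "b \<in> T \<longleftrightarrow> \<pi> b = \<pi> v"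
    using ab(2) unfolding T_def by blast+
  moreover have "\<pi> v \<in> {\<pi> a, \<pi> b}" using insertI1[of "\<pi> v" "{w'}"] unfolding ab(1) .
  ultimately have "a \<in> T \<and> b \<notin> T \<or> b \<in> T \<and> a \<notin> T" using ab(3) by (metis insert_iff singletonD)
  then have "{a, b} \<in> {e\<in>edges G. e \<inter> T \<noteq> {} \<and> e - T \<noteq> {}}" using ab(2) by blast
  moreover have "finite {e\<in>edges G. e \<inter> T \<noteq> {} \<and> e - T \<noteq> {}}"
    using stree_finite_edges[OF stree] by simp
  ultimately have "card {e\<in>edges G. e \<inter> T \<noteq> {} \<and> e - T \<noteq> {}} \<noteq> 0"
    using card_0_eq by blast
  then have "card {e\<in>edges G. e \<inter> T \<noteq> {} \<and> e - T \<noteq> {}} = 1" using le1 by linarith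
  moreover have "T \<noteq> {}" "T \<subseteq> verts G" using v by (auto simp: T_def)
  ultimately show ?thesis
    using \<open>conn_in G T\<close> unfolding is_tail_def T_def by blast
qed

lemma smooth_subset_ZA:
  assumes ext: "extremal_assignment n Z" and sm: "smooth n Z" and a: "weight_data n a"
    and light: "\<forall>B\<in>maximal_elems (contraction_indicator n Z). sum a B \<le> 1"
    and G: "G \<in> S n"
  shows "Z G \<subseteq> ZA n a G"
proof
  fix v assume "v \<in> Z G"
  then have v: "v \<in> verts G" using extremal_assignment_subset[OF ext G] by blast
  obtain G' \<pi> where G': "G' \<in> S2 n" "contracts n G G' \<pi>" "\<pi> v \<in> Z G'"
    using sm G \<open>v \<in> Z G\<close> unfolding smooth_def by blast
  define T where "T = {x\<in>verts G. \<pi> x = \<pi> v}"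
  let ?C = "contraction_indicator n Z"
  have "lab n G' (\<pi> v) \<in> ?C" unfolding contraction_indicator_def using G' by blast
  moreover have "finite ?C"
    by (rule finite_subset[of _ "Pow {1..n}"]) (auto simp: contraction_indicator_def lab_def)
  ultimately obtain B where B: "B \<in> ?C" "lab n G' (\<pi> v) \<subseteq> B" "\<forall>B'\<in>?C. B \<subseteq> B' \<longrightarrow> B' = B"
    using finite_has_maximal2 by metis
  then have "B \<in> maximal_elems ?C" unfolding maximal_elems_def by blast
  then have "sum a B \<le> 1" using light by blast
  moreover have "sum a (lab n G' (\<pi> v)) \<le> sum a B"
  proof (rule sum_mono2[OF _ B(2)])
    have "B \<subseteq> {1..n}" by (rule contraction_indicatorD(1)[OF ext B(1)])
    then show "finite B" by (rule finite_subset) simp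
    show "0 \<le> a i" if "i \<in> B - lab n G' (\<pi> v)" for i
      using a that \<open>B \<subseteq> {1..n}\<close> unfolding weight_data_def by force
  qed
  ultimately have "sum a (lab n G' (\<pi> v)) \<le> 1" by simp
  then have "sum a (labs n G T) \<le> 1" unfolding T_def labs_fibre[OF G G'(2)] .
  moreover have "is_tail G T" "v \<in> T"
    using contraction_fibre_is_tail[OF G G'(1,2) v] v unfolding T_def by auto
  ultimately show "v \<in> ZA n a G" using v unfolding ZA_def by blast
qed

text \<open>Weight 1 - (b - 1) e on j, e = t / b on the other b - 1 labels of B1 and 2 t outside B1,
  where t = 1 / (2 m - 1) and m labels lie outside B1. Then B1 has weight exactly 1, the total is
  1 + 2 m t > 2, and a set avoiding j and some label outside B1 weighs at most
  (b - 1) e + 2 (m - 1) t \<le> (2 m - 1) t = 1.\<close>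

lemma weights_concentrated:
  fixes M :: "nat set set"
  assumes B1: "B1 \<subseteq> {1..n}" "j \<in> B1" and m: "2 \<le> card ({1..n} - B1)"
    and M: "\<forall>B\<in>M. B = B1 \<or> (B \<subseteq> {1..n} - {j} \<and> \<not> {1..n} - B1 \<subseteq> B)"
  shows "\<exists>a. weight_data n a \<and> (\<forall>B\<in>M. sum a B \<le> 1)"
proof -
  define b where "b = card B1"
  define m where "m = card ({1..n} - B1)"
  define t :: rat where "t = 1 / (2 * of_nat m - 1)"
  define e :: rat where "e = t / of_nat b"
  define a :: "nat \<Rightarrow> rat" where
    "a i = (if i = j then 1 - (of_nat b - 1) * e else if i \<in> B1 then e else 2 * t)" for i
  have "finite B1" using B1(1) finite_subset by blast
  then have b: "1 \<le> b" using B1(2) unfolding b_def by (simp add: Suc_le_eq card_gt_0_iff) blast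
  have m2: "2 \<le> (of_nat m :: rat)" using m unfolding m_def by simp
  then have t: "0 < t" "t \<le> 1 / 3" "(2 * of_nat m - 1) * t = 1" unfolding t_def by (simp_all add: field_simps)
  have e: "0 < e" "e \<le> t" "(of_nat b - 1) * e \<le> t" "0 \<le> (of_nat b - 1) * e"
    using b t(1) by (simp_all add: e_def field_simps)
  have bounds: "\<forall>i\<in>{1..n}. 0 < a i \<and> a i \<le> 1"
    using t e by (simp add: a_def)
  have "sum a B1 = a j + sum a (B1 - {j})"
    using \<open>finite B1\<close> B1(2) by (simp add: sum.remove)
  also have "sum a (B1 - {j}) = (of_nat b - 1) * e"
    using \<open>finite B1\<close> B1(2) b by (simp add: a_def b_def of_nat_diff)
  finally have sum_B1: "sum a B1 = 1" by (simp add: a_def)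
  have "sum a ({1..n} - B1) = sum (\<lambda>_. 2 * t) ({1..n} - B1)"
    using B1(2) by (intro sum.cong) (auto simp: a_def)
  then have "sum a ({1..n} - B1) = 2 * of_nat m * t" by (simp add: m_def)
  with sum_B1 have total: "sum a {1..n} = 1 + 2 * of_nat m * t"
    using B1(1) by (simp add: sum.subset_diff)
  then have "2 < sum a {1..n}" using t(1,3) by (simp add: algebra_simps)
  then have "weight_data n a" using bounds unfolding weight_data_def by blast
  moreover have "sum a B \<le> 1" if "B \<in> M" for B
  proof (cases "B = B1")
    case False
    with M that have B: "B \<subseteq> {1..n} - {j}" and "\<not> {1..n} - B1 \<subseteq> B" by auto
    then obtain x where x: "x \<in> {1..n} - B1" "x \<notin> B" by blast
    have jx: "j \<in> {1..n}" "j \<noteq> x" using x(1) B1 by auto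
    have "sum a B \<le> sum a ({1..n} - {j, x})"
      using B x jx t(1) e by (intro sum_mono2) (auto simp: a_def)
    also have "sum a ({1..n} - {j, x}) = sum a {1..n} - a j - a x"
      using jx x(1) by (simp add: sum_diff)
    also have "\<dots> = (2 * of_nat m - 2) * t + (of_nat b - 1) * e"
      using total x(1) jx(2) by (simp add: a_def algebra_simps)
    also have "\<dots> \<le> 1" using t e by (simp add: algebra_simps)
    finally show ?thesis .
  qed (simp add: sum_B1)
  ultimately show ?thesis by blast
qed

lemma weights_constant:
  fixes M :: "nat set set"
  assumes n: "3 \<le> n" and small: "\<forall>B\<in>M. 2 * card B < n"
  shows "\<exists>a. weight_data n a \<and> (\<forall>B\<in>M. sum a B \<le> 1)"
proof -
  define c :: rat where "c = 2 / (of_nat n - 1)"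
  have n': "3 \<le> (of_nat n :: rat)" using n by simp
  then have "0 < c" "c \<le> 1" "2 < of_nat n * c" unfolding c_def by (simp_all add: field_simps)
  then have "weight_data n (\<lambda>_. c)" unfolding weight_data_def by simp
  moreover have "of_nat (card B) * c \<le> 1" if "B \<in> M" for B
  proof -
    have "2 * card B + 1 \<le> n" using small that by force
    then have "2 * (of_nat (card B) :: rat) \<le> of_nat n - 1" by linarith
    then show ?thesis using n' unfolding c_def by (simp add: field_simps)
  qed
  ultimately show ?thesis by (intro exI[of _ "\<lambda>_. c"]) simp
qed

lemma weights_for_noncovering_family:
  fixes M :: "nat set set"
  assumes n: "3 \<le> n"
    and M: "\<forall>B\<in>M. B \<subseteq> {1..n} \<and> 2 \<le> card ({1..n} - B)"
    and no_cover: "\<forall>B\<in>M. \<forall>B'\<in>M. \<not> {1..n} \<subseteq> B \<union> B'"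
    and cases: "(\<exists>j\<in>{1..n}. \<forall>B\<in>M. j \<notin> B)
       \<or> (\<exists>j\<in>{1..n}. card {B\<in>M. j \<in> B} = 1)
       \<or> (\<forall>B\<in>M. 2 * card B < n)"
  shows "\<exists>a. weight_data n a \<and> (\<forall>B\<in>M. sum a B \<le> 1)"
  using cases
proof (elim disjE)
  assume "\<exists>j\<in>{1..n}. \<forall>B\<in>M. j \<notin> B"
  then obtain j where j: "j \<in> {1..n}" "\<forall>B\<in>M. j \<notin> B" by blast
  have "\<not> {1..n} - {j} \<subseteq> B" if "B \<in> M" for B
  proof
    assume "{1..n} - {j} \<subseteq> B"
    then have "card ({1..n} - B) \<le> card {j}" by (intro card_mono) auto
    moreover have "2 \<le> card ({1..n} - B)" using M that by blast
    ultimately show False by simp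
  qed
  moreover have "card ({1..n} - {j}) = n - 1" using j(1) by simp
  ultimately show ?thesis
    using j M n by (intro weights_concentrated[of "{j}"]) auto
next
  assume "\<exists>j\<in>{1..n}. card {B\<in>M. j \<in> B} = 1"
  then obtain j where j: "j \<in> {1..n}" "card {B\<in>M. j \<in> B} = 1" by blast
  then obtain B1 where B1: "{B\<in>M. j \<in> B} = {B1}" by (auto simp: card_1_singleton_iff)
  then have "B1 \<in> M" "j \<in> B1" by blast+
  moreover have "B = B1 \<or> (B \<subseteq> {1..n} - {j} \<and> \<not> {1..n} - B1 \<subseteq> B)" if "B \<in> M" for B
  proof (cases "j \<in> B")
    case True
    with that B1 show ?thesis by blast
  next
    case False
    have "\<not> {1..n} \<subseteq> B1 \<union> B" using no_cover \<open>B1 \<in> M\<close> that by blast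
    then have "\<not> {1..n} - B1 \<subseteq> B" by blast
    moreover have "B \<subseteq> {1..n} - {j}" using M that False by blast
    ultimately show ?thesis by blast
  qed
  ultimately show ?thesis
    using M by (intro weights_concentrated[of B1 n j]) auto
next
  assume "\<forall>B\<in>M. 2 * card B < n"
  with n show ?thesis by (rule weights_constant)
qed

theorem proposition7p14:
  fixes n :: nat and Z :: "stree \<Rightarrow> nat set"
  assumes "n \<ge> 3"
    and "extremal_assignment n Z"
    and "smooth n Z"
    and "(\<exists>j\<in>{1..n}. \<forall>B\<in>maximal_elems (contraction_indicator n Z). j \<notin> B)
       \<or> (\<exists>j\<in>{1..n}. card {B\<in>maximal_elems (contraction_indicator n Z). j \<in> B} = 1)
       \<or> (\<forall>B\<in>maximal_elems (contraction_indicator n Z). 2 * card B < n)"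
  shows "\<exists>a. weight_data n a \<and> (\<forall>G\<in>S n. Z G \<subseteq> ZA n a G)"
proof -
  let ?M = "maximal_elems (contraction_indicator n Z)"
  have M: "?M \<subseteq> contraction_indicator n Z" unfolding maximal_elems_def by blast
  then have "\<forall>B\<in>?M. B \<subseteq> {1..n} \<and> 2 \<le> card ({1..n} - B)"
    using contraction_indicatorD[OF assms(2)] by blast
  moreover have "\<forall>B\<in>?M. \<forall>B'\<in>?M. \<not> {1..n} \<subseteq> B \<union> B'"
    using M contraction_indicator_not_cover[OF assms(2)] by blast
  ultimately obtain a where "weight_data n a" "\<forall>B\<in>?M. sum a B \<le> 1"
    using weights_for_noncovering_family[OF assms(1) _ _ assms(4)] by blast
  then show ?thesis using smooth_subset_ZA[OF assms(2,3)] by blast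
qed

end
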